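(* Let $\Delta$ be a $K$-dissection diagram on a compact surface $S$, and let $\alpha,\beta$ be two intersecting closed curves on $S$ (transverse to $\Delta$). Let $\gamma$ be the commutator $[\alpha,\beta]$ based at an intersection point of $\alpha$ and $\beta$. Then $\mathrm{effcont}(\gamma)\subseteq[\mathrm{cont}(\alpha),\mathrm{cont}(\beta)]$.
   Context: A $K$-dissection diagram on $(S,\partial S)$: finite collection of essential simple closed curves and properly embedded essential arcs, in minimal position, transversely oriented and labeled by vertices of $K$, curves with equal labels disjoint, intersecting only if labels adjacent. For a loop $\gamma$ and a point $*$ on it, $\phi_*(\gamma)\in A(K)$ is the product of labels of curves/arcs crossed along $\gamma$ from $*$ (exponents $\pm1$ by transverse orientation). $\mathrm{cont}(\gamma)$ is the set of labels crossed by $\gamma$; $\mathrm{rcont}_*(\gamma)$ is the smallest vertex set $V$ with $\phi_*(\gamma)\in A(V)$. Vertex sets $P,Q$ are adjacent if for all $p\in P,q\in Q$, $p=q$ or $p,q$ adjacent. $\mathrm{effcont}(\gamma)$ is the smallest subset $Z\subseteq\mathrm{cont}(\gamma)$ such that $Z\supseteq\mathrm{rcont}_*(\gamma)$ for every point $*\in\gamma$ and $\mathrm{cont}(\gamma)\setminus Z$ is adjacent to $Z$. For vertex sets $U,V$: write $U$ as the join of its anti-components $U_i$ (vertex sets of components of the complement of the induced subgraph on $U$) and likewise $V$; $U''$ is the union of those $U_i$ not adjacent to $V$, $V''$ the union of those $V_j$ not adjacent to $U$, and $[U,V]=U''\cup V''$. *)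

theory Defs
  imports Main
begin

text \<open>The graph K: vertices of type 'v (finite), adjacency relation E (symmetric, irreflexive).
  A letter of a word is a pair (vertex, sign), sign True = exponent +1, False = exponent -1.\<close>

type_synonym 'v letter = "'v \<times> bool"

definition inv_word :: "'v letter list \<Rightarrow> 'v letter list" where
  "inv_word w = rev (map (\<lambda>(x, s). (x, \<not> s)) w)"

text \<open>Equality in the right-angled Artin group A(K): the congruence on words generated by
  free cancellation and by commutation of adjacent generators.\<close>

inductive raag_eq :: "('v \<Rightarrow> 'v \<Rightarrow> bool) \<Rightarrow> 'v letter list \<Rightarrow> 'v letter list \<Rightarrow> bool"
  for E where
  refl: "raag_eq E w w"
| sym: "raag_eq E u w \<Longrightarrow> raag_eq E w u"
| trans: "raag_eq E u v \<Longrightarrow> raag_eq E v w \<Longrightarrow> raag_eq E u w"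
| cancel: "raag_eq E (p @ [(x, s), (x, \<not> s)] @ q) (p @ q)"
| commute: "E x y \<Longrightarrow> raag_eq E (p @ [(x, s), (y, t)] @ q) (p @ [(y, t), (x, s)] @ q)"

definition in_special :: "('v \<Rightarrow> 'v \<Rightarrow> bool) \<Rightarrow> 'v set \<Rightarrow> 'v letter list \<Rightarrow> bool" where
  "in_special E V w \<longleftrightarrow> (\<exists>w'. raag_eq E w w' \<and> fst ` set w' \<subseteq> V)"

definition rcont :: "('v \<Rightarrow> 'v \<Rightarrow> bool) \<Rightarrow> 'v letter list \<Rightarrow> 'v set" where
  "rcont E w = (THE V. in_special E V w \<and> (\<forall>V'. in_special E V' w \<longrightarrow> V \<subseteq> V'))"

definition cont :: "'v letter list \<Rightarrow> 'v set" where
  "cont w = fst ` set w"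

definition adj_sets :: "('v \<Rightarrow> 'v \<Rightarrow> bool) \<Rightarrow> 'v set \<Rightarrow> 'v set \<Rightarrow> bool" where
  "adj_sets E P Q \<longleftrightarrow> (\<forall>p\<in>P. \<forall>q\<in>Q. p = q \<or> E p q)"

text \<open>A transverse loop is recorded by its cyclic sequence of signed crossings w (read from
  some base point). Moving the base point * along the loop (off the diagram) yields exactly
  the cyclic rotations of w, so phi_*(gamma) ranges over the words rotate k w.\<close>

definition effcont_ok :: "('v \<Rightarrow> 'v \<Rightarrow> bool) \<Rightarrow> 'v letter list \<Rightarrow> 'v set \<Rightarrow> bool" where
  "effcont_ok E w Z \<longleftrightarrow> Z \<subseteq> cont w \<and> (\<forall>k. rcont E (rotate k w) \<subseteq> Z)
      \<and> adj_sets E (cont w - Z) Z"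

definition effcont :: "('v \<Rightarrow> 'v \<Rightarrow> bool) \<Rightarrow> 'v letter list \<Rightarrow> 'v set" where
  "effcont E w = (THE Z. effcont_ok E w Z \<and> (\<forall>Z'. effcont_ok E w Z' \<longrightarrow> Z \<subseteq> Z'))"

definition nonadj_in :: "('v \<Rightarrow> 'v \<Rightarrow> bool) \<Rightarrow> 'v set \<Rightarrow> 'v \<Rightarrow> 'v \<Rightarrow> bool" where
  "nonadj_in E U x y \<longleftrightarrow> x \<in> U \<and> y \<in> U \<and> x \<noteq> y \<and> \<not> E x y"

definition anticomps :: "('v \<Rightarrow> 'v \<Rightarrow> bool) \<Rightarrow> 'v set \<Rightarrow> 'v set set" where
  "anticomps E U = {{y \<in> U. (nonadj_in E U)\<^sup>*\<^sup>* x y} | x. x \<in> U}"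

definition bracket :: "('v \<Rightarrow> 'v \<Rightarrow> bool) \<Rightarrow> 'v set \<Rightarrow> 'v set \<Rightarrow> 'v set" where
  "bracket E U V =
     \<Union>{C \<in> anticomps E U. \<not> adj_sets E C V} \<union> \<Union>{D \<in> anticomps E V. \<not> adj_sets E D U}"

end

theory Submission
  imports Defs
begin

text \<open>Put Z = [cont a, cont b]. Every vertex of cont a \<union> cont b outside Z is adjacent to all of Z
  (an anticomponent of cont a missing from Z is adjacent to cont b, and is joined to every other
  anticomponent of cont a), so in every rotation of the commutator the letters outside Z commute
  past those in Z. The letters outside Z form a rotation of the commutator of the restricted
  words, and these restrictions commute because cont a - Z is adjacent to cont b. Hence every
  rotation lies in A(Z), and Z is admissible for effcont.\<close>

declare raag_eq.trans [trans]

lemma cont_Nil [simp]: "cont [] = {}"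
  and cont_Cons [simp]: "cont (l # w) = insert (fst l) (cont w)"
  and cont_append [simp]: "cont (u @ w) = cont u \<union> cont w"
  and cont_rotate [simp]: "cont (rotate k w) = cont w"
  by (auto simp: cont_def)

lemma inv_word_Nil [simp]: "inv_word [] = []"
  by (simp add: inv_word_def)

lemma inv_word_Cons [simp]: "inv_word (l # w) = inv_word w @ [(fst l, \<not> snd l)]"
  by (cases l) (simp add: inv_word_def)

lemma inv_word_append [simp]: "inv_word (u @ w) = inv_word w @ inv_word u"
  by (simp add: inv_word_def)

lemma cont_inv_word [simp]: "cont (inv_word w) = cont w"
  by (induction w) auto

lemma filter_inv_word:
  "filter (\<lambda>l. P (fst l)) (inv_word w) = inv_word (filter (\<lambda>l. P (fst l)) w)"
  by (induction w) auto

lemma adj_sets_mono: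
  "adj_sets E P Q \<Longrightarrow> P' \<subseteq> P \<Longrightarrow> Q' \<subseteq> Q \<Longrightarrow> adj_sets E P' Q'"
  unfolding adj_sets_def by blast

lemma raag_eq_append_cong: "raag_eq E u v \<Longrightarrow> raag_eq E (p @ u @ q) (p @ v @ q)"
proof (induction rule: raag_eq.induct)
  case (refl w) then show ?case by (rule raag_eq.refl)
next
  case (sym u w) then show ?case by (blast intro: raag_eq.sym)
next
  case (trans u v w) then show ?case by (blast intro: raag_eq.trans)
next
  case (cancel p' x s q')
  then show ?case using raag_eq.cancel[of E "p @ p'" x s "q' @ q"] by simp
next
  case (commute x y p' s t q')
  then show ?case using raag_eq.commute[of E x y "p @ p'" s t "q' @ q"] by simp
qed

lemma raag_eq_Cons_cong: "raag_eq E u v \<Longrightarrow> raag_eq E (l # u) (l # v)"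
  using raag_eq_append_cong[of E u v "[l]" "[]"] by simp

lemma raag_eq_append_right_cong: "raag_eq E u v \<Longrightarrow> raag_eq E (u @ q) (v @ q)"
  using raag_eq_append_cong[of E u v "[]" q] by simp

lemma raag_eq_swap:
  assumes "x = y \<or> E x y"
  shows "raag_eq E ([(x, s), (y, t)] @ q) ([(y, t), (x, s)] @ q)"
proof (cases "E x y \<or> s = t")
  case True
  with assms show ?thesis using raag_eq.commute[of E x y "[]"] by (auto intro: raag_eq.refl)
next
  case False
  with assms have "y = x" "t = (\<not> s)" by auto
  then have "raag_eq E ([(x, s), (y, t)] @ q) q" "raag_eq E ([(y, t), (x, s)] @ q) q"
    using raag_eq.cancel[of E "[]" x s q] raag_eq.cancel[of E "[]" x "\<not> s" q] by auto
  then show ?thesis by (blast intro: raag_eq.sym raag_eq.trans)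
qed

lemma raag_eq_Cons_commute:
  "adj_sets E {fst l} (cont w) \<Longrightarrow> raag_eq E (l # w) (w @ [l])"
proof (induction w)
  case Nil then show ?case by (simp add: raag_eq.refl)
next
  case (Cons l' w)
  have "raag_eq E (l # l' # w) (l' # l # w)"
    using raag_eq_swap[of "fst l" "fst l'" E "snd l" "snd l'" w] Cons.prems
    by (simp add: adj_sets_def)
  also have "raag_eq E (l' # l # w) (l' # w @ [l])"
    using Cons by (simp add: raag_eq_Cons_cong adj_sets_def)
  finally show ?case by simp
qed

lemma raag_eq_append_commute:
  "adj_sets E (cont u) (cont w) \<Longrightarrow> raag_eq E (u @ w) (w @ u)"
proof (induction u)
  case Nil then show ?case by (simp add: raag_eq.refl)
next
  case (Cons l u)
  have "raag_eq E ((l # u) @ w) ((l # w) @ u)"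
    using Cons by (simp add: raag_eq_Cons_cong adj_sets_def)
  also have "raag_eq E ((l # w) @ u) ((w @ [l]) @ u)"
    using Cons.prems by (intro raag_eq_append_right_cong raag_eq_Cons_commute) (simp add: adj_sets_def)
  finally show ?case by simp
qed

lemma raag_eq_append_inv_word: "raag_eq E (w @ inv_word w) []"
proof (induction w)
  case Nil then show ?case by (simp add: raag_eq.refl)
next
  case (Cons l w)
  have "raag_eq E (l # w @ inv_word w @ [(fst l, \<not> snd l)]) [l, (fst l, \<not> snd l)]"
    using raag_eq_append_cong[OF Cons.IH, where p="[l]" and q="[(fst l, \<not> snd l)]"] by simp
  also have "raag_eq E [l, (fst l, \<not> snd l)] []"
    using raag_eq.cancel[of E "[]" "fst l" "snd l" "[]"] by simp
  finally show ?case by simp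
qed

lemma raag_eq_commutator_Nil:
  assumes "adj_sets E (cont u) (cont w)"
  shows "raag_eq E (u @ w @ inv_word u @ inv_word w) []"
proof -
  have "raag_eq E (u @ w @ inv_word u @ inv_word w) (w @ u @ inv_word u @ inv_word w)"
    using raag_eq_append_right_cong[OF raag_eq_append_commute[OF assms]] by simp
  also have "raag_eq E (w @ u @ inv_word u @ inv_word w) (w @ inv_word w)"
    using raag_eq_append_cong[OF raag_eq_append_inv_word, where p=w and q="inv_word w"] by simp
  also have "raag_eq E (w @ inv_word w) []"
    by (rule raag_eq_append_inv_word)
  finally show ?thesis by simp
qed

text \<open>Conjugating p @ q by q gives q @ p, and conjugates of the identity are trivial.\<close>

lemma raag_eq_Nil_append_commute:
  assumes "raag_eq E (p @ q) []"
  shows "raag_eq E (q @ p) []"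
proof -
  have "raag_eq E (q @ p) (q @ p @ q @ inv_word q)"
    using raag_eq_append_cong[OF raag_eq_append_inv_word, where p="q @ p" and q="[]"]
    by (simp add: raag_eq.sym)
  also have "raag_eq E (q @ p @ q @ inv_word q) (q @ inv_word q)"
    using raag_eq_append_cong[OF assms, where p=q and q="inv_word q"] by simp
  also have "raag_eq E (q @ inv_word q) []"
    by (rule raag_eq_append_inv_word)
  finally show ?thesis by simp
qed

lemma raag_eq_Nil_filter_rotate:
  assumes "raag_eq E (filter P w) []"
  shows "raag_eq E (filter P (rotate k w)) []"
proof -
  define m where "m = k mod length w"
  have "raag_eq E (filter P (take m w) @ filter P (drop m w)) []"
    using assms by (metis append_take_drop_id filter_append)
  then show ?thesis
    unfolding m_def rotate_drop_take filter_append by (rule raag_eq_Nil_append_commute)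
qed

lemma raag_eq_filter_partition:
  "adj_sets E (cont w - Z) Z
   \<Longrightarrow> raag_eq E w (filter (\<lambda>l. fst l \<in> Z) w @ filter (\<lambda>l. fst l \<notin> Z) w)"
proof (induction w)
  case Nil then show ?case by (simp add: raag_eq.refl)
next
  case (Cons l w)
  let ?in = "filter (\<lambda>l. fst l \<in> Z) w" and ?out = "filter (\<lambda>l. fst l \<notin> Z) w"
  have "adj_sets E (cont w - Z) Z"
    using Cons.prems by (rule adj_sets_mono) auto
  with Cons.IH have IH: "raag_eq E (l # w) (l # ?in @ ?out)"
    by (simp add: raag_eq_Cons_cong)
  show ?case
  proof (cases "fst l \<in> Z")
    case True
    with IH show ?thesis by simp
  next
    case False
    have "adj_sets E {fst l} (cont ?in)"
      using Cons.prems by (rule adj_sets_mono) (use False in \<open>auto simp: cont_def\<close>)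
    then have "raag_eq E ((l # ?in) @ ?out) ((?in @ [l]) @ ?out)"
      by (intro raag_eq_append_right_cong raag_eq_Cons_commute)
    with IH False show ?thesis by (auto intro: raag_eq.trans)
  qed
qed

lemma raag_eq_filter:
  "raag_eq E u w \<Longrightarrow> raag_eq E (filter (\<lambda>l. fst l \<in> V) u) (filter (\<lambda>l. fst l \<in> V) w)"
proof (induction rule: raag_eq.induct)
  case (refl w) then show ?case by (rule raag_eq.refl)
next
  case (sym u w) then show ?case by (blast intro: raag_eq.sym)
next
  case (trans u v w) then show ?case by (blast intro: raag_eq.trans)
next
  case (cancel p x s q)
  show ?case
    using raag_eq.cancel[of E "filter (\<lambda>l. fst l \<in> V) p" x s "filter (\<lambda>l. fst l \<in> V) q"]
    by (simp add: raag_eq.refl)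
next
  case (commute x y p s t q)
  then show ?case
    using raag_eq.commute[of E x y "filter (\<lambda>l. fst l \<in> V) p" s t "filter (\<lambda>l. fst l \<in> V) q"]
    by (simp add: raag_eq.refl)
qed

lemma in_special_Int:
  assumes "in_special E V w" "in_special E W w"
  shows "in_special E (V \<inter> W) w"
proof -
  obtain v where v: "raag_eq E w v" "fst ` set v \<subseteq> V"
    using assms(1) unfolding in_special_def by blast
  obtain u where u: "raag_eq E w u" "fst ` set u \<subseteq> W"
    using assms(2) unfolding in_special_def by blast
  have "raag_eq E v u"
    using v(1) u(1) by (blast intro: raag_eq.sym raag_eq.trans)
  then have "raag_eq E (filter (\<lambda>l. fst l \<in> V) v) (filter (\<lambda>l. fst l \<in> V) u)"
    by (rule raag_eq_filter)
  moreover have "filter (\<lambda>l. fst l \<in> V) v = v"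
    using v(2) by (auto intro: filter_True)
  ultimately have "raag_eq E w (filter (\<lambda>l. fst l \<in> V) u)"
    using v(1) by (auto intro: raag_eq.trans)
  moreover have "fst ` set (filter (\<lambda>l. fst l \<in> V) u) \<subseteq> V \<inter> W"
    using u(2) by auto
  ultimately show ?thesis unfolding in_special_def by blast
qed

lemma in_special_Inter:
  "finite F \<Longrightarrow> (\<And>V. V \<in> F \<Longrightarrow> in_special E V w) \<Longrightarrow> in_special E (\<Inter>F) w"
proof (induction F rule: finite_induct)
  case empty then show ?case unfolding in_special_def by (auto intro: raag_eq.refl)
next
  case (insert V F) then show ?case by (simp add: in_special_Int)
qed

lemma The_least_subset_eq:
  assumes "P M" "\<And>V. P V \<Longrightarrow> M \<subseteq> V"
  shows "(THE V. P V \<and> (\<forall>V'. P V' \<longrightarrow> V \<subseteq> V')) = M"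
  using assms by (intro the_equality) (auto intro: subset_antisym)

lemma rcont_subset:
  fixes E :: "'v::finite \<Rightarrow> 'v \<Rightarrow> bool"
  assumes "in_special E V w"
  shows "rcont E w \<subseteq> V"
proof -
  have "rcont E w = \<Inter>{V. in_special E V w}"
    unfolding rcont_def by (intro The_least_subset_eq in_special_Inter) auto
  with assms show ?thesis by blast
qed

lemma effcont_ok_Inter:
  assumes "F \<noteq> {}" "\<And>Z. Z \<in> F \<Longrightarrow> effcont_ok E w Z"
  shows "effcont_ok E w (\<Inter>F)"
  unfolding effcont_ok_def
proof (intro conjI allI)
  show "\<Inter>F \<subseteq> cont w"
    using assms unfolding effcont_ok_def by blast
  show "rcont E (rotate k w) \<subseteq> \<Inter>F" for k
    using assms(2) unfolding effcont_ok_def by blast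
  show "adj_sets E (cont w - \<Inter>F) (\<Inter>F)"
    using assms(2) unfolding effcont_ok_def adj_sets_def by blast
qed

lemma effcont_subset:
  assumes "effcont_ok E w Z"
  shows "effcont E w \<subseteq> Z"
proof -
  have "effcont E w = \<Inter>{Z. effcont_ok E w Z}"
    unfolding effcont_def using assms by (intro The_least_subset_eq effcont_ok_Inter) auto
  with assms show ?thesis by blast
qed

lemma in_special_if_filter_Nil:
  assumes "adj_sets E (cont w - Z) Z" and "raag_eq E (filter (\<lambda>l. fst l \<notin> Z) w) []"
  shows "in_special E Z w"
proof -
  have "raag_eq E w (filter (\<lambda>l. fst l \<in> Z) w @ filter (\<lambda>l. fst l \<notin> Z) w)"
    using assms(1) by (rule raag_eq_filter_partition)
  also have "raag_eq E (filter (\<lambda>l. fst l \<in> Z) w @ filter (\<lambda>l. fst l \<notin> Z) w)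
                       (filter (\<lambda>l. fst l \<in> Z) w)"
    using raag_eq_append_cong[OF assms(2), where p="filter (\<lambda>l. fst l \<in> Z) w" and q="[]"]
    by simp
  finally show ?thesis unfolding in_special_def by auto
qed

lemma bracket_commute: "bracket E U V = bracket E V U"
  unfolding bracket_def by blast

lemma bracket_subset: "bracket E U V \<subseteq> U \<union> V"
  unfolding bracket_def anticomps_def by blast

lemma adj_sets_diff_bracket: "adj_sets E (U - bracket E U V) V"
  unfolding adj_sets_def
proof (intro ballI)
  fix r q assume r: "r \<in> U - bracket E U V" and q: "q \<in> V"
  let ?C = "{y \<in> U. (nonadj_in E U)\<^sup>*\<^sup>* r y}"
  have "?C \<in> anticomps E U" "r \<in> ?C"
    using r unfolding anticomps_def by auto
  with r have "adj_sets E ?C V"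
    unfolding bracket_def by blast
  with \<open>r \<in> ?C\<close> q show "r = q \<or> E r q" unfolding adj_sets_def by blast
qed

lemma adj_sets_diff_bracket_bracket:
  assumes "\<And>x y. E x y \<Longrightarrow> E y x"
  shows "adj_sets E (U - bracket E U V) (bracket E U V)"
  unfolding adj_sets_def
proof (intro ballI)
  fix r z assume r: "r \<in> U - bracket E U V" and z: "z \<in> bracket E U V"
  show "r = z \<or> E r z"
  proof (rule ccontr)
    assume nonadj: "\<not> (r = z \<or> E r z)"
    from z consider (U) C where "C \<in> anticomps E U" "\<not> adj_sets E C V" "z \<in> C"
      | (V) D where "D \<in> anticomps E V" "z \<in> D"
      unfolding bracket_def by blast
    then show False
    proof cases
      case U
      then obtain x where C: "C = {y \<in> U. (nonadj_in E U)\<^sup>*\<^sup>* x y}"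
        unfolding anticomps_def by blast
      have "nonadj_in E U z r"
        using assms nonadj r U C unfolding nonadj_in_def by auto
      with U C r have "r \<in> C" by (auto intro: rtranclp.rtrancl_into_rtrancl)
      with U r show False unfolding bracket_def by blast
    next
      case V
      then have "z \<in> V" unfolding anticomps_def by auto
      with r nonadj adj_sets_diff_bracket[of E U V] show False
        unfolding adj_sets_def by blast
    qed
  qed
qed

lemma adj_sets_Un_diff_bracket_bracket:
  assumes "\<And>x y. E x y \<Longrightarrow> E y x"
  shows "adj_sets E ((U \<union> V) - bracket E U V) (bracket E U V)"
  using adj_sets_diff_bracket_bracket[where E=E and U=U and V=V, OF assms]
    adj_sets_diff_bracket_bracket[where E=E and U=V and V=U, OF assms]
  unfolding bracket_commute[of E V U] adj_sets_def by blast

theorem lemma6p12: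
  fixes E :: "'v::finite \<Rightarrow> 'v \<Rightarrow> bool"
    and a b :: "'v letter list"
  assumes "\<And>x y. E x y \<Longrightarrow> E y x"
    and "\<And>x. \<not> E x x"
  shows "effcont E (a @ b @ inv_word a @ inv_word b) \<subseteq> bracket E (cont a) (cont b)"
proof (rule effcont_subset)
  let ?w = "a @ b @ inv_word a @ inv_word b" and ?Z = "bracket E (cont a) (cont b)"
  let ?a = "filter (\<lambda>l. fst l \<notin> ?Z) a" and ?b = "filter (\<lambda>l. fst l \<notin> ?Z) b"
  have cont_w: "cont ?w = cont a \<union> cont b" by auto
  have "adj_sets E (cont ?a) (cont ?b)"
    using adj_sets_diff_bracket[of E "cont a" "cont b"] by (rule adj_sets_mono) (auto simp: cont_def)
  then have "raag_eq E (?a @ ?b @ inv_word ?a @ inv_word ?b) []"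
    by (rule raag_eq_commutator_Nil)
  then have "raag_eq E (filter (\<lambda>l. fst l \<notin> ?Z) ?w) []"
    by (simp add: filter_inv_word[of "\<lambda>v. v \<notin> ?Z"])
  moreover have adj: "adj_sets E (cont ?w - ?Z) ?Z"
    unfolding cont_w using assms(1) by (rule adj_sets_Un_diff_bracket_bracket)
  ultimately have "in_special E ?Z (rotate k ?w)" for k
    by (intro in_special_if_filter_Nil) (simp_all add: raag_eq_Nil_filter_rotate del: cont_append)
  then show "effcont_ok E ?w ?Z"
    using rcont_subset bracket_subset[of E "cont a" "cont b"] adj
    unfolding effcont_ok_def cont_w by blast
qed

end
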